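(* Let $G$ be a connected, locally finite graph and let $l$ be the random coloring of $G$ with root $v_0$ and probabilities $(p_n)$, where $(p_n)$ is monotonically decreasing, $\lim_{n\to\infty}p_n=0$ and $\sum_{n\in\mathbb{N}}p_n=\infty$. Then, almost surely, every automorphism $g$ of $G$ preserving $l$ fixes setwise every equivalence class of the relation $\sim$, i.e. $g(u)\sim u$ for all vertices $u$.
   Context: All graphs are simple with vertex set $V$; $d$ is graph distance, $B_x(r)=\{y: d(x,y)\le r\}$, $S_x(r)=\{y: d(x,y)=r\}$. Random coloring: fix a root vertex $v_0$ and a sequence $(p_n)_{n\ge0}$ in $[0,1]$; each vertex $x$ with $d(v_0,x)=n$ is colored blue with probability $p_n$ and red with probability $1-p_n$, independently of all other vertices. An automorphism $g$ preserves the coloring $l$ if $l(g(x))=l(x)$ for all $x$. The relation $\sim$ on $V$: $u\sim w$ iff there exists $n\in\mathbb{N}$ with $B_u(n)=B_w(n)$; this is an equivalence relation. *)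

theory Defs
  imports "HOL-Probability.Probability"
begin

definition simple_graph :: "'a set \<Rightarrow> ('a \<Rightarrow> 'a \<Rightarrow> bool) \<Rightarrow> bool" where
  "simple_graph V E \<longleftrightarrow> (\<forall>x y. E x y \<longrightarrow> x \<in> V \<and> y \<in> V \<and> E y x \<and> x \<noteq> y)"

definition walk :: "('a \<Rightarrow> 'a \<Rightarrow> bool) \<Rightarrow> nat \<Rightarrow> 'a \<Rightarrow> 'a \<Rightarrow> bool" where
  "walk E n x y \<longleftrightarrow> (\<exists>f::nat \<Rightarrow> 'a. f 0 = x \<and> f n = y \<and> (\<forall>i<n. E (f i) (f (Suc i))))"

definition connected_graph :: "'a set \<Rightarrow> ('a \<Rightarrow> 'a \<Rightarrow> bool) \<Rightarrow> bool" where
  "connected_graph V E \<longleftrightarrow> (\<forall>x\<in>V. \<forall>y\<in>V. \<exists>n. walk E n x y)"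

definition locally_finite :: "'a set \<Rightarrow> ('a \<Rightarrow> 'a \<Rightarrow> bool) \<Rightarrow> bool" where
  "locally_finite V E \<longleftrightarrow> (\<forall>x\<in>V. finite {y. E x y})"

text \<open>Graph distance (meaningful for connected graphs).\<close>
definition gdist :: "('a \<Rightarrow> 'a \<Rightarrow> bool) \<Rightarrow> 'a \<Rightarrow> 'a \<Rightarrow> nat" where
  "gdist E x y = (LEAST n. walk E n x y)"

definition gball :: "'a set \<Rightarrow> ('a \<Rightarrow> 'a \<Rightarrow> bool) \<Rightarrow> 'a \<Rightarrow> nat \<Rightarrow> 'a set" where
  "gball V E x r = {y \<in> V. gdist E x y \<le> r}"

definition ball_equiv :: "'a set \<Rightarrow> ('a \<Rightarrow> 'a \<Rightarrow> bool) \<Rightarrow> 'a \<Rightarrow> 'a \<Rightarrow> bool" where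
  "ball_equiv V E u w \<longleftrightarrow> (\<exists>n. gball V E u n = gball V E w n)"

definition graph_automorphism :: "'a set \<Rightarrow> ('a \<Rightarrow> 'a \<Rightarrow> bool) \<Rightarrow> ('a \<Rightarrow> 'a) \<Rightarrow> bool" where
  "graph_automorphism V E g \<longleftrightarrow> bij_betw g V V \<and> (\<forall>x\<in>V. \<forall>y\<in>V. E x y \<longleftrightarrow> E (g x) (g y))"

text \<open>Colorings: True = blue, False = red.\<close>
definition preserves_coloring :: "'a set \<Rightarrow> ('a \<Rightarrow> 'a) \<Rightarrow> ('a \<Rightarrow> bool) \<Rightarrow> bool" where
  "preserves_coloring V g l \<longleftrightarrow> (\<forall>x\<in>V. l (g x) = l x)"

definition random_coloring :: "'a set \<Rightarrow> ('a \<Rightarrow> 'a \<Rightarrow> bool) \<Rightarrow> 'a \<Rightarrow> (nat \<Rightarrow> real) \<Rightarrow> ('a \<Rightarrow> bool) measure" where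
  "random_coloring V E v0 p = (\<Pi>\<^sub>M x\<in>V. measure_pmf (bernoulli_pmf (p (gdist E v0 x))))"

end

theory Submission
  imports Defs
begin

text \<open>
  An automorphism \<open>g\<close> preserving the colouring maps \<open>B_u(R)\<close> onto \<open>B_(g u)(R)\<close>, so
  both balls contain equally many blue vertices for every \<open>R\<close>. As \<open>V\<close> is countable, it
  suffices to show that for fixed inequivalent \<open>u\<close>, \<open>w\<close> this coincidence has probability
  zero. Let \<open>D = d(u,w) \<ge> 1\<close>. The symmetric differences \<open>S_k\<close> of \<open>B_u(kD)\<close> and \<open>B_w(kD)\<close>
  are nonempty, pairwise disjoint and lie at distance \<open>kD + O(1)\<close> from \<open>v\<^sub>0\<close>. Equal counts
  on the two balls force equal counts on the two halves of \<open>S_k\<close>; conditioning on one vertex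
  of \<open>S_k\<close> shows that this has probability at most \<open>1 - p(c + kD)\<close> once \<open>p < 1/2\<close>. These
  events are independent and \<open>\<Sum>\<^sub>k p(c + kD) = \<infinity>\<close> because \<open>p\<close> is decreasing and not
  summable, so almost surely one of them fails.
\<close>

lemma walk_0: "walk E 0 x y \<longleftrightarrow> x = y"
  unfolding walk_def by auto

lemma walk_SucD: "walk E (Suc n) x y \<Longrightarrow> \<exists>z. walk E n x z \<and> E z y"
  unfolding walk_def by fastforce

lemma walk_append:
  assumes "walk E m x y" "walk E n y z"
  shows "walk E (m + n) x z"
proof -
  from assms obtain f g where f: "f 0 = x" "f m = y" "\<forall>i<m. E (f i) (f (Suc i))"
    and g: "g 0 = y" "g n = z" "\<forall>i<n. E (g i) (g (Suc i))"
    unfolding walk_def by blast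
  define h where "h i = (if i \<le> m then f i else g (i - m))" for i
  have "E (h i) (h (Suc i))" if "i < m + n" for i
  proof (cases "i < m")
    case False
    then have "i - m < n" "Suc i - m = Suc (i - m)" using that by auto
    then show ?thesis using g f False unfolding h_def by (cases "i = m") auto
  qed (use f in \<open>auto simp: h_def\<close>)
  moreover have "h 0 = x" "h (m + n) = z" using f g unfolding h_def by auto
  ultimately show ?thesis unfolding walk_def by blast
qed

lemma walk_reverse:
  assumes "symp E" "walk E n x y"
  shows "walk E n y x"
proof -
  from assms(2) obtain f where f: "f 0 = x" "f n = y" "\<forall>i<n. E (f i) (f (Suc i))"
    unfolding walk_def by blast
  have "E (f (n - i)) (f (n - Suc i))" if "i < n" for i
  proof -
    have "E (f (n - Suc i)) (f (Suc (n - Suc i)))" using f(3) that by simp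
    moreover have "Suc (n - Suc i) = n - i" using that by simp
    ultimately show ?thesis using assms(1) by (simp add: sympD)
  qed
  with f show ?thesis unfolding walk_def by (intro exI[of _ "\<lambda>i. f (n - i)"]) auto
qed

subsection \<open>Distance and balls in a connected, locally finite graph\<close>

locale connected_locally_finite_graph =
  fixes V :: "'a set" and E :: "'a \<Rightarrow> 'a \<Rightarrow> bool"
  assumes simple: "simple_graph V E"
    and connected: "connected_graph V E"
    and locally_finite: "locally_finite V E"
begin

lemma edge_in_V: "E x y \<Longrightarrow> x \<in> V \<and> y \<in> V"
  using simple unfolding simple_graph_def by blast

lemma symp_E: "symp E"
  using simple unfolding simple_graph_def by (blast intro: sympI)

lemma walk_gdist:
  assumes "x \<in> V" "y \<in> V"
  shows "walk E (gdist E x y) x y"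
proof -
  obtain n where "walk E n x y" using connected assms unfolding connected_graph_def by blast
  then show ?thesis unfolding gdist_def by (rule LeastI)
qed

lemma gdist_le_walk: "walk E n x y \<Longrightarrow> gdist E x y \<le> n"
  unfolding gdist_def by (rule Least_le)

lemma gdist_eq_0_iff: "x \<in> V \<Longrightarrow> y \<in> V \<Longrightarrow> gdist E x y = 0 \<longleftrightarrow> x = y"
  using walk_gdist[of x y] gdist_le_walk[of 0 x x] by (auto simp: walk_0)

lemma gdist_commute:
  assumes "x \<in> V" "y \<in> V"
  shows "gdist E x y = gdist E y x"
  using gdist_le_walk[OF walk_reverse[OF symp_E walk_gdist[OF assms]]]
    gdist_le_walk[OF walk_reverse[OF symp_E walk_gdist[OF assms(2,1)]]] by simp

lemma gdist_triangle:
  assumes "x \<in> V" "y \<in> V" "z \<in> V"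
  shows "gdist E x z \<le> gdist E x y + gdist E y z"
  using gdist_le_walk[OF walk_append[OF walk_gdist[OF assms(1,2)] walk_gdist[OF assms(2,3)]]] .

lemma finite_walk_ends: "finite {y. walk E n x y}"
proof (induction n)
  case 0
  have "{y. walk E 0 x y} = {x}" by (auto simp: walk_0)
  then show ?case by simp
next
  case (Suc n)
  have "{y. walk E (Suc n) x y} \<subseteq> (\<Union>z\<in>{z. walk E n x z} \<inter> V. {y. E z y})"
  proof
    fix y assume "y \<in> {y. walk E (Suc n) x y}"
    then obtain z where "walk E n x z" "E z y" using walk_SucD[of E n x y] by auto
    moreover have "z \<in> V" using edge_in_V \<open>E z y\<close> by simp
    ultimately show "y \<in> (\<Union>z\<in>{z. walk E n x z} \<inter> V. {y. E z y})" by blast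
  qed
  moreover have "finite (\<Union>z\<in>{z. walk E n x z} \<inter> V. {y. E z y})"
  proof (rule finite_UN_I)
    show "finite ({z. walk E n x z} \<inter> V)" using Suc.IH by simp
    show "finite {y. E z y}" if "z \<in> {z. walk E n x z} \<inter> V" for z
      using locally_finite that unfolding locally_finite_def by blast
  qed
  ultimately show ?case by (rule finite_subset)
qed

lemma finite_gball:
  assumes "u \<in> V"
  shows "finite (gball V E u r)"
proof -
  have "gball V E u r \<subseteq> (\<Union>n\<le>r. {y. walk E n u y})"
  proof
    fix y assume "y \<in> gball V E u r"
    then have "y \<in> V" "gdist E u y \<le> r" by (auto simp: gball_def)
    then show "y \<in> (\<Union>n\<le>r. {y. walk E n u y})" using walk_gdist[OF assms] by blast
  qed
  moreover have "finite (\<Union>n\<le>r. {y. walk E n u y})"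
    using finite_walk_ends by (intro finite_UN_I) auto
  ultimately show ?thesis by (rule finite_subset)
qed

lemma countable_vertices:
  assumes "v \<in> V"
  shows "countable V"
proof -
  have "V \<subseteq> (\<Union>n. {y. walk E n v y})" using walk_gdist[OF assms] by blast
  moreover have "countable (\<Union>n. {y. walk E n v y})"
    using finite_walk_ends by (intro countable_UN) (auto intro: countable_finite)
  ultimately show ?thesis by (rule countable_subset)
qed

lemma automorphism_in_V: "graph_automorphism V E g \<Longrightarrow> x \<in> V \<Longrightarrow> g x \<in> V"
  unfolding graph_automorphism_def using bij_betwE by blast

lemma automorphism_walk:
  assumes g: "graph_automorphism V E g" and "walk E n x y"
  shows "walk E n (g x) (g y)"
proof -
  obtain f where f: "f 0 = x" "f n = y" "\<forall>i<n. E (f i) (f (Suc i))"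
    using \<open>walk E n x y\<close> unfolding walk_def by blast
  then have "E (g (f i)) (g (f (Suc i)))" if "i < n" for i
    using g edge_in_V that unfolding graph_automorphism_def by blast
  with f show ?thesis unfolding walk_def by (intro exI[of _ "g \<circ> f"]) auto
qed

lemma automorphism_inv:
  assumes g: "graph_automorphism V E g"
  shows "graph_automorphism V E (inv_into V g)"
proof -
  have b: "bij_betw g V V" using g unfolding graph_automorphism_def by blast
  have "E (inv_into V g x) (inv_into V g y) \<longleftrightarrow> E x y" if "x \<in> V" "y \<in> V" for x y
  proof -
    have "inv_into V g x \<in> V" "inv_into V g y \<in> V"
      using b that by (metis bij_betw_def inv_into_into)+
    moreover have "g (inv_into V g x) = x" "g (inv_into V g y) = y"
      using b that by (metis bij_betw_imp_surj_on f_inv_into_f)+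
    ultimately show ?thesis using g unfolding graph_automorphism_def by metis
  qed
  with bij_betw_inv_into[OF b] show ?thesis unfolding graph_automorphism_def by blast
qed

lemma gdist_automorphism:
  assumes g: "graph_automorphism V E g" and x: "x \<in> V" and y: "y \<in> V"
  shows "gdist E (g x) (g y) = gdist E x y"
proof (rule antisym)
  show "gdist E (g x) (g y) \<le> gdist E x y"
    using automorphism_walk[OF g walk_gdist[OF x y]] by (rule gdist_le_walk)
  have "inv_into V g (g x) = x" "inv_into V g (g y) = y"
    using g x y unfolding graph_automorphism_def by (metis bij_betw_def inv_into_f_f)+
  then show "gdist E x y \<le> gdist E (g x) (g y)"
    using automorphism_walk[OF automorphism_inv[OF g] walk_gdist] automorphism_in_V[OF g] x y
    by (metis gdist_le_walk)
qed

lemma gball_automorphism: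
  assumes g: "graph_automorphism V E g" and u: "u \<in> V"
  shows "g ` gball V E u r = gball V E (g u) r"
proof
  show "g ` gball V E u r \<subseteq> gball V E (g u) r"
    using gdist_automorphism[OF g u] automorphism_in_V[OF g] by (auto simp: gball_def)
  show "gball V E (g u) r \<subseteq> g ` gball V E u r"
  proof
    fix z assume z: "z \<in> gball V E (g u) r"
    then have "z \<in> g ` V"
      using g unfolding graph_automorphism_def gball_def bij_betw_def by auto
    then obtain y where "y \<in> V" "z = g y" by blast
    with z show "z \<in> g ` gball V E u r"
      using gdist_automorphism[OF g u] by (auto simp: gball_def)
  qed
qed

lemma card_blue_gball_automorphism:
  assumes g: "graph_automorphism V E g" and l: "preserves_coloring V g l" and u: "u \<in> V"
  shows "card {y \<in> gball V E (g u) r. l y} = card {y \<in> gball V E u r. l y}"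
proof -
  have "l (g y) = l y" if "y \<in> gball V E u r" for y
    using l that by (auto simp: preserves_coloring_def gball_def)
  then have "{y \<in> gball V E (g u) r. l y} = g ` {y \<in> gball V E u r. l y}"
    unfolding gball_automorphism[OF g u, symmetric] by auto
  moreover have "inj_on g {y \<in> gball V E u r. l y}"
    using g unfolding graph_automorphism_def bij_betw_def gball_def by (auto intro: inj_on_subset)
  ultimately show ?thesis by (simp add: card_image)
qed

subsection \<open>Shells\<close>

definition shell :: "'a \<Rightarrow> 'a \<Rightarrow> nat \<Rightarrow> 'a set" where
  "shell u w r = (gball V E u r - gball V E w r) \<union> (gball V E w r - gball V E u r)"

lemma shell_gdist:
  assumes u: "u \<in> V" and w: "w \<in> V" and x: "x \<in> shell u w r"
  shows "r < max (gdist E u x) (gdist E w x)" "max (gdist E u x) (gdist E w x) \<le> r + gdist E u w"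
proof -
  have "x \<in> V" using x by (auto simp: shell_def gball_def)
  then have "gdist E u x \<le> gdist E u w + gdist E w x" "gdist E w x \<le> gdist E u w + gdist E u x"
    using gdist_triangle[OF u w] gdist_triangle[OF w u] gdist_commute[OF u w] by auto
  with x show "r < max (gdist E u x) (gdist E w x)" "max (gdist E u x) (gdist E w x) \<le> r + gdist E u w"
    by (auto simp: shell_def gball_def)
qed

lemma disjoint_family_shell:
  assumes "u \<in> V" "w \<in> V"
  shows "disjoint_family (\<lambda>k. shell u w ((k + m) * gdist E u w))"
proof -
  have "shell u w ((j + m) * gdist E u w) \<inter> shell u w ((k + m) * gdist E u w) = {}"
    if "j < k" for j k
  proof -
    have "(j + m) * gdist E u w + gdist E u w \<le> (k + m) * gdist E u w"
      using mult_le_mono1[of "Suc (j + m)" "k + m" "gdist E u w"] that by simp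
    then show ?thesis using shell_gdist[OF assms] by (fastforce simp del: max_less_iff_conj)
  qed
  then show ?thesis unfolding disjoint_family_on_def by (metis Int_commute linorder_neqE_nat)
qed

lemma gdist_shell_bounds:
  assumes u: "u \<in> V" and w: "w \<in> V" and v: "v \<in> V" and D: "1 \<le> gdist E u w"
    and x: "x \<in> shell u w (k * gdist E u w)"
  shows "k \<le> gdist E v u + gdist E v x" "gdist E v x \<le> gdist E v u + k * gdist E u w + gdist E u w"
proof -
  have "x \<in> V" using x by (auto simp: shell_def gball_def)
  then have tri: "gdist E w x \<le> gdist E u w + gdist E u x" "gdist E u x \<le> gdist E v u + gdist E v x"
    "gdist E v x \<le> gdist E v u + gdist E u x"
    using gdist_triangle[OF w u] gdist_commute[OF u w] gdist_triangle[OF u v] gdist_commute[OF u v]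
      gdist_triangle[OF v u] by auto
  then have "k * gdist E u w < gdist E u x + gdist E u w"
    using shell_gdist(1)[OF u w x] by linarith
  then have "k \<le> gdist E u x"
  proof (cases k)
    case (Suc j)
    then have "j * gdist E u w < gdist E u x" using \<open>k * gdist E u w < _\<close> by simp
    moreover have "j \<le> j * gdist E u w" using D by simp
    ultimately show ?thesis using Suc by linarith
  qed simp
  with tri show "k \<le> gdist E v u + gdist E v x" by linarith
  show "gdist E v x \<le> gdist E v u + k * gdist E u w + gdist E u w"
    using shell_gdist(2)[OF u w x] tri by linarith
qed

end

subsection \<open>Independent events and divergent series\<close>

lemma (in prob_space) prob_split_le_max:
  assumes sets: "T \<in> events" "G\<^sub>1 \<in> events" "G\<^sub>0 \<in> events" and disj: "G\<^sub>1 \<inter> G\<^sub>0 = {}"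
    and indep: "prob (T \<inter> G\<^sub>1) = prob T * prob G\<^sub>1"
      "prob ((space M - T) \<inter> G\<^sub>0) = prob (space M - T) * prob G\<^sub>0"
  shows "prob ((T \<inter> G\<^sub>1) \<union> ((space M - T) \<inter> G\<^sub>0)) \<le> max (prob T) (1 - prob T)"
proof -
  let ?m = "max (prob T) (1 - prob T)"
  have "prob ((T \<inter> G\<^sub>1) \<union> ((space M - T) \<inter> G\<^sub>0)) \<le> prob (T \<inter> G\<^sub>1) + prob ((space M - T) \<inter> G\<^sub>0)"
    using sets by (intro measure_Un_le) auto
  also have "\<dots> = prob T * prob G\<^sub>1 + (1 - prob T) * prob G\<^sub>0"
    using indep prob_compl[OF sets(1)] by simp
  also have "\<dots> \<le> ?m * prob G\<^sub>1 + ?m * prob G\<^sub>0"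
    by (intro add_mono mult_right_mono) auto
  also have "\<dots> = ?m * prob (G\<^sub>1 \<union> G\<^sub>0)"
    using sets disj by (simp add: finite_measure_Union distrib_left)
  also have "\<dots> \<le> ?m"
    by (intro mult_left_le) (auto simp: measure_nonneg)
  finally show ?thesis .
qed

lemma (in prob_space) prob_INT_eq_0_if_not_summable:
  assumes indep: "indep_events A UNIV" and not_summable: "\<not> summable (\<lambda>k. 1 - prob (A k))"
  shows "prob (\<Inter>k. A k) = 0"
proof (rule ccontr)
  assume "prob (\<Inter>k. A k) \<noteq> 0"
  then have pos: "0 < prob (\<Inter>k. A k)" using measure_nonneg[of M "\<Inter>k. A k"] by linarith
  have sets: "A k \<in> events" for k using indep by (auto simp: indep_events_def)
  have le: "prob (\<Inter>k. A k) \<le> exp (- (\<Sum>k\<le>N. 1 - prob (A k)))" for N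
  proof -
    have "prob (\<Inter>k. A k) \<le> prob (\<Inter>k\<le>N. A k)"
      using sets by (intro finite_measure_mono) auto
    also have "\<dots> = (\<Prod>k\<le>N. prob (A k))"
      using indep unfolding indep_events_def by auto
    also have "\<dots> \<le> (\<Prod>k\<le>N. exp (- (1 - prob (A k))))"
      using exp_ge_add_one_self[of "prob (A _) - 1"] by (intro prod_mono) (auto simp: measure_nonneg)
    also have "\<dots> = exp (- (\<Sum>k\<le>N. 1 - prob (A k)))"
      by (simp only: sum_negf[symmetric] exp_sum[OF finite_atMost])
    finally show ?thesis .
  qed
  have ln_le: "ln (prob (\<Inter>k. A k)) \<le> - (\<Sum>k\<le>N. 1 - prob (A k))" for N
    using ln_le_cancel_iff[OF pos exp_gt_zero] le[of N] by simp
  have "(\<Sum>k\<le>N. 1 - prob (A k)) \<le> - ln (prob (\<Inter>k. A k))" for N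
    using ln_le[of N] by linarith
  then have "summable (\<lambda>k. 1 - prob (A k))"
    by (rule bounded_imp_summable[rotated]) simp
  with not_summable show False ..
qed

lemma not_summable_arith_progression:
  fixes p :: "nat \<Rightarrow> real"
  assumes dec: "decseq p" and nonneg: "\<And>n. 0 \<le> p n" and not_summable: "\<not> summable p"
    and D: "1 \<le> D"
  shows "\<not> summable (\<lambda>k. p (c + k * D))"
proof
  define s where "s k = p (c + k * D)" for k
  assume "summable (\<lambda>k. p (c + k * D))"
  then have s: "summable s" unfolding s_def .
  have s_nonneg: "0 \<le> s k" for k unfolding s_def by (rule nonneg)
  \<comment> \<open>\<open>p (n + c) \<le> s (n div D)\<close> by monotonicity, and the right-hand series repeats each
    term of \<open>s\<close> exactly \<open>D\<close> times.\<close>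
  have "summable (\<lambda>n. s (n div D))"
  proof (rule bounded_imp_summable)
    show "0 \<le> s (n div D)" for n by (rule s_nonneg)
    fix N
    have "Suc N \<le> Suc N * D" using D mult_le_mono2[of 1 D "Suc N"] by simp
    then have "(\<Sum>n\<le>N. s (n div D)) \<le> (\<Sum>n<Suc N * D. s (n div D))"
      by (intro sum_mono2) (auto simp: s_nonneg)
    also have "\<dots> = (\<Sum>k<Suc N. \<Sum>n\<in>{k * D..<k * D + D}. s (n div D))"
      by (rule sum.nat_group[symmetric])
    also have "\<dots> = real D * (\<Sum>k<Suc N. s k)"
    proof -
      have "(\<Sum>n\<in>{k * D..<k * D + D}. s (n div D)) = real D * s k" for k
      proof -
        have "n div D = k" if "n \<in> {k * D..<k * D + D}" for n
          using that by (auto intro!: div_nat_eqI simp: algebra_simps)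
        then show ?thesis by simp
      qed
      then show ?thesis by (simp add: sum_distrib_left del: sum.lessThan_Suc)
    qed
    also have "\<dots> \<le> real D * suminf s"
      using s s_nonneg by (intro mult_left_mono sum_le_suminf) auto
    finally show "(\<Sum>n\<le>N. s (n div D)) \<le> real D * suminf s" .
  qed
  moreover have "norm (p (n + c)) \<le> s (n div D)" for n
  proof -
    have "c + n div D * D \<le> n + c" using div_times_less_eq_dividend[of n D] by linarith
    then show ?thesis using dec nonneg unfolding s_def decseq_def by simp
  qed
  ultimately have "summable (\<lambda>n. p (n + c))" by (rule summable_comparison_test')
  with not_summable show False by simp
qed

subsection \<open>Independent coin flips\<close>

definition determined_by :: "'i set \<Rightarrow> (('i \<Rightarrow> 'b) \<Rightarrow> bool) \<Rightarrow> bool" where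
  "determined_by K P \<longleftrightarrow> (\<forall>\<omega> \<omega>'. (\<forall>i\<in>K. \<omega> i = \<omega>' i) \<longrightarrow> P \<omega> = P \<omega>')"

lemma determined_by_restrict: "determined_by K P \<Longrightarrow> P (restrict \<omega> K) = P \<omega>"
  unfolding determined_by_def by simp

lemma determined_by_card:
  assumes "A \<subseteq> K" "C \<subseteq> K"
  shows "determined_by K (\<lambda>\<omega>. R (card {y \<in> A. \<omega> y}) (card {y \<in> C. \<omega> y}))"
  unfolding determined_by_def
proof (intro allI impI)
  fix \<omega> \<omega>' :: "'a \<Rightarrow> bool"
  assume "\<forall>i\<in>K. \<omega> i = \<omega>' i"
  then have "{y \<in> A. \<omega> y} = {y \<in> A. \<omega>' y}" "{y \<in> C. \<omega> y} = {y \<in> C. \<omega>' y}"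
    using assms by auto
  then show "R (card {y \<in> A. \<omega> y}) (card {y \<in> C. \<omega> y}) = R (card {y \<in> A. \<omega>' y}) (card {y \<in> C. \<omega>' y})"
    by simp
qed

lemma card_filter_remove:
  assumes "finite A" "x \<in> A"
  shows "card {y \<in> A. P y} = card {y \<in> A - {x}. P y} + (if P x then 1 else 0)"
proof (cases "P x")
  case True
  then have "{y \<in> A. P y} = insert x {y \<in> A - {x}. P y}" using assms(2) by auto
  then show ?thesis using True assms(1) by simp
next
  case False
  then have "{y \<in> A. P y} = {y \<in> A - {x}. P y}" by auto
  then show ?thesis using False by simp
qed

locale independent_coins =
  fixes I :: "'i set" and q :: "'i \<Rightarrow> real"
  assumes q_nonneg: "0 \<le> q i" and q_le_1: "q i \<le> 1"
begin

definition coin :: "'i \<Rightarrow> bool measure" where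
  "coin i = measure_pmf (bernoulli_pmf (q i))"

sublocale product_prob_space coin I
  by (rule product_prob_spaceI) (simp add: coin_def prob_space_measure_pmf)

abbreviation coins :: "('i \<Rightarrow> bool) measure" where
  "coins \<equiv> PiM I coin"

lemma space_coin [simp]: "space (coin i) = UNIV"
  by (simp add: coin_def)

lemma sets_coin [simp]: "sets (coin i) = UNIV"
  by (simp add: coin_def)

lemma sets_PiM_coin_finite:
  assumes "finite K"
  shows "sets (PiM K coin) = Pow (space (PiM K coin))"
proof -
  have "sets (PiM K coin) = sets (PiM K (\<lambda>_. count_space (UNIV :: bool set)))"
    by (rule sets_PiM_cong) simp_all
  also have "\<dots> = Pow (space (PiM K coin))"
    using count_space_PiM_finite[of K "\<lambda>_. UNIV :: bool set"] assms by (simp add: space_PiM)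
  finally show ?thesis .
qed

lemma determined_event_eq_vimage:
  assumes "determined_by K P"
  shows "{\<omega> \<in> space coins. P \<omega>} = (\<lambda>\<omega>. restrict \<omega> K) -` {f \<in> space (PiM K coin). P f} \<inter> space coins"
  using determined_by_restrict[OF assms] by (auto simp: space_PiM)

lemma determined_event_in_sets:
  assumes "finite K" "K \<subseteq> I" "determined_by K P"
  shows "{\<omega> \<in> space coins. P \<omega>} \<in> events"
  unfolding determined_event_eq_vimage[OF assms(3)]
  by (rule measurable_sets[OF measurable_restrict_subset[OF assms(2)]])
     (auto simp: sets_PiM_coin_finite[OF assms(1)])

lemma indep_vars_coordinates: "indep_vars coin (\<lambda>i \<omega>. \<omega> i) I"
proof (cases "I = {}")
  case True
  show ?thesis unfolding indep_vars_def indep_sets_def by (simp add: True)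
next
  case False
  have "distr coins coins (\<lambda>\<omega>. restrict \<omega> I) = distr coins coins (\<lambda>\<omega>. \<omega>)"
    by (rule distr_cong) (auto simp: space_PiM)
  moreover have "PiM I (\<lambda>i. distr coins (coin i) (\<lambda>\<omega>. \<omega> i)) = coins"
    by (rule PiM_cong) (simp_all add: PiM_component)
  ultimately show ?thesis
    by (subst indep_vars_iff_distr_eq_PiM'[OF False]) simp_all
qed

lemma indep_events_determined:
  assumes disj: "disjoint_family_on K L" and K: "\<And>j. j \<in> L \<Longrightarrow> finite (K j) \<and> K j \<subseteq> I"
    and P: "\<And>j. j \<in> L \<Longrightarrow> determined_by (K j) (P j)"
  shows "indep_events (\<lambda>j. {\<omega> \<in> space coins. P j \<omega>}) L"
proof -
  have "indep_vars (\<lambda>j. PiM (K j) coin) (\<lambda>j \<omega>. restrict \<omega> (K j)) L"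
    using indep_vars_restrict[OF indep_vars_coordinates _ disj] K by simp
  then have "indep_events (\<lambda>j. {\<omega> \<in> space coins. P j (restrict \<omega> (K j))}) L"
    by (rule indep_eventsI_indep_vars) (simp add: K sets_PiM_coin_finite)
  moreover have "{\<omega> \<in> space coins. P j (restrict \<omega> (K j))} = {\<omega> \<in> space coins. P j \<omega>}" if "j \<in> L" for j
    using determined_by_restrict[OF P[OF that]] by simp
  ultimately show ?thesis unfolding indep_events_def_alt by (simp cong: indep_sets_cong)
qed

lemma prob_Int_determined:
  assumes "K\<^sub>1 \<inter> K\<^sub>2 = {}" "finite K\<^sub>1" "finite K\<^sub>2" "K\<^sub>1 \<subseteq> I" "K\<^sub>2 \<subseteq> I"
    and "determined_by K\<^sub>1 P\<^sub>1" "determined_by K\<^sub>2 P\<^sub>2"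
  shows "prob ({\<omega> \<in> space coins. P\<^sub>1 \<omega>} \<inter> {\<omega> \<in> space coins. P\<^sub>2 \<omega>}) =
    prob {\<omega> \<in> space coins. P\<^sub>1 \<omega>} * prob {\<omega> \<in> space coins. P\<^sub>2 \<omega>}"
proof -
  have "indep_events (\<lambda>b. {\<omega> \<in> space coins. (if b then P\<^sub>1 else P\<^sub>2) \<omega>}) UNIV"
    using assms
    by (intro indep_events_determined[where K = "\<lambda>b. if b then K\<^sub>1 else K\<^sub>2"])
       (auto simp: disjoint_family_on_def)
  then show ?thesis
    unfolding indep_events_def by (auto simp: UNIV_bool Int_commute mult.commute)
qed

lemma prob_coin: "i \<in> I \<Longrightarrow> prob {\<omega> \<in> space coins. \<omega> i} = q i"
  using emeasure_PiM_Collect_single[of i "{True}"] q_nonneg[of i] q_le_1[of i]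
  by (simp add: coin_def emeasure_pmf_single emeasure_eq_measure)

text \<open>Conditioning on the single flip at \<open>x\<close>: the remaining flips must make up a
  difference of one or of zero, depending on its outcome.\<close>
lemma prob_card_eq_le:
  assumes fin: "finite A" "finite C" and disj: "A \<inter> C = {}" and sub: "A \<subseteq> I" "C \<subseteq> I"
    and x: "x \<in> A"
  shows "prob {\<omega> \<in> space coins. card {y \<in> A. \<omega> y} = card {y \<in> C. \<omega> y}} \<le> max (q x) (1 - q x)"
proof -
  define B where "B = (A - {x}) \<union> C"
  define T where "T = {\<omega> \<in> space coins. \<omega> x}"
  define G\<^sub>1 where "G\<^sub>1 = {\<omega> \<in> space coins. card {y \<in> A - {x}. \<omega> y} + 1 = card {y \<in> C. \<omega> y}}"
  define G\<^sub>0 where "G\<^sub>0 = {\<omega> \<in> space coins. card {y \<in> A - {x}. \<omega> y} = card {y \<in> C. \<omega> y}}"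
  have B: "finite B" "B \<subseteq> I" "{x} \<inter> B = {}" "{x} \<subseteq> I"
    using fin sub disj x by (auto simp: B_def)
  have T_det: "determined_by {x} (\<lambda>\<omega>. \<omega> x)" "determined_by {x} (\<lambda>\<omega>. \<not> \<omega> x)"
    unfolding determined_by_def by auto
  have G_det: "determined_by B (\<lambda>\<omega>. card {y \<in> A - {x}. \<omega> y} + 1 = card {y \<in> C. \<omega> y})"
    "determined_by B (\<lambda>\<omega>. card {y \<in> A - {x}. \<omega> y} = card {y \<in> C. \<omega> y})"
    by (rule determined_by_card[where R = "\<lambda>a c. a + 1 = c"] determined_by_card[where R = "(=)"];
        auto simp: B_def)+
  have sets: "T \<in> events" "G\<^sub>1 \<in> events" "G\<^sub>0 \<in> events"
    using determined_event_in_sets[OF _ B(4) T_det(1)] determined_event_in_sets[OF B(1,2) G_det(1)]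
      determined_event_in_sets[OF B(1,2) G_det(2)]
    by (simp_all add: T_def G\<^sub>1_def G\<^sub>0_def)
  have compl: "space coins - T = {\<omega> \<in> space coins. \<not> \<omega> x}" by (auto simp: T_def)
  have "{\<omega> \<in> space coins. card {y \<in> A. \<omega> y} = card {y \<in> C. \<omega> y}}
      \<subseteq> (T \<inter> G\<^sub>1) \<union> ((space coins - T) \<inter> G\<^sub>0)"
  proof
    fix \<omega> assume "\<omega> \<in> {\<omega> \<in> space coins. card {y \<in> A. \<omega> y} = card {y \<in> C. \<omega> y}}"
    then have "\<omega> \<in> space coins"
      "card {y \<in> A - {x}. \<omega> y} + (if \<omega> x then 1 else 0) = card {y \<in> C. \<omega> y}"
      using card_filter_remove[OF fin(1) x, of \<omega>] by auto
    then show "\<omega> \<in> (T \<inter> G\<^sub>1) \<union> ((space coins - T) \<inter> G\<^sub>0)"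
      unfolding T_def G\<^sub>1_def G\<^sub>0_def by (cases "\<omega> x") auto
  qed
  then have "prob {\<omega> \<in> space coins. card {y \<in> A. \<omega> y} = card {y \<in> C. \<omega> y}}
      \<le> prob ((T \<inter> G\<^sub>1) \<union> ((space coins - T) \<inter> G\<^sub>0))"
    using sets by (intro finite_measure_mono) auto
  also have "\<dots> \<le> max (prob T) (1 - prob T)"
  proof (rule prob_split_le_max[OF sets])
    show "G\<^sub>1 \<inter> G\<^sub>0 = {}" by (auto simp: G\<^sub>1_def G\<^sub>0_def)
    show "prob (T \<inter> G\<^sub>1) = prob T * prob G\<^sub>1"
      unfolding T_def G\<^sub>1_def using B T_det G_det by (intro prob_Int_determined) auto
    show "prob ((space coins - T) \<inter> G\<^sub>0) = prob (space coins - T) * prob G\<^sub>0"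
      unfolding compl G\<^sub>0_def using B T_det G_det by (intro prob_Int_determined) auto
  qed
  also have "prob T = q x" using prob_coin x sub by (auto simp: T_def)
  finally show ?thesis .
qed

lemma prob_card_eq_le_Un:
  assumes "finite A" "finite C" "A \<inter> C = {}" "A \<subseteq> I" "C \<subseteq> I" "x \<in> A \<union> C"
  shows "prob {\<omega> \<in> space coins. card {y \<in> A. \<omega> y} = card {y \<in> C. \<omega> y}} \<le> max (q x) (1 - q x)"
proof (cases "x \<in> A")
  case False
  then have "prob {\<omega> \<in> space coins. card {y \<in> C. \<omega> y} = card {y \<in> A. \<omega> y}} \<le> max (q x) (1 - q x)"
    using assms by (intro prob_card_eq_le) auto
  then show ?thesis by (simp add: eq_commute)
qed (use assms prob_card_eq_le in auto)

lemma null_sets_INT_card_eq: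
  assumes disj: "disjoint_family (\<lambda>k. A k \<union> C k)"
    and AC: "\<And>k. finite (A k)" "\<And>k. finite (C k)" "\<And>k. A k \<inter> C k = {}"
      "\<And>k. A k \<union> C k \<subseteq> I"
    and x: "\<And>k. x k \<in> A k \<union> C k"
    and not_summable: "\<not> summable (\<lambda>k. min (q (x k)) (1 - q (x k)))"
  shows "(\<Inter>k. {\<omega> \<in> space coins. card {y \<in> A k. \<omega> y} = card {y \<in> C k. \<omega> y}}) \<in> null_sets coins"
proof -
  define Ev where "Ev k = {\<omega> \<in> space coins. card {y \<in> A k. \<omega> y} = card {y \<in> C k. \<omega> y}}" for k
  have det: "determined_by (A k \<union> C k) (\<lambda>\<omega>. card {y \<in> A k. \<omega> y} = card {y \<in> C k. \<omega> y})" for k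
    by (rule determined_by_card) auto
  have fin: "finite (A k \<union> C k) \<and> A k \<union> C k \<subseteq> I" for k
    using AC by simp
  have "indep_events Ev UNIV"
    unfolding Ev_def using disj
  proof (rule indep_events_determined)
    show "finite (A k \<union> C k) \<and> A k \<union> C k \<subseteq> I" for k by (rule fin)
  qed (rule det)
  moreover have "\<not> summable (\<lambda>k. 1 - prob (Ev k))"
  proof
    assume "summable (\<lambda>k. 1 - prob (Ev k))"
    moreover have "norm (min (q (x k)) (1 - q (x k))) \<le> 1 - prob (Ev k)" for k
    proof -
      have "prob (Ev k) \<le> max (q (x k)) (1 - q (x k))"
        unfolding Ev_def using AC(4)[of k] by (intro prob_card_eq_le_Un[OF AC(1-3) _ _ x]) auto
      then show ?thesis using q_nonneg[of "x k"] q_le_1[of "x k"] by (auto simp: min_def max_def)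
    qed
    ultimately have "summable (\<lambda>k. min (q (x k)) (1 - q (x k)))"
      by (rule summable_comparison_test'[where N = 0])
    with not_summable show False by contradiction
  qed
  ultimately have "prob (\<Inter>k. Ev k) = 0"
    by (rule prob_INT_eq_0_if_not_summable)
  moreover have "(\<Inter>k. Ev k) \<in> events"
  proof -
    have "Ev k \<in> events" for k
      unfolding Ev_def using fin[of k] by (intro determined_event_in_sets[OF _ _ det]) auto
    then show ?thesis by (intro sets.countable_INT) auto
  qed
  ultimately show ?thesis by (simp add: null_sets_def emeasure_eq_measure Ev_def)
qed

end

subsection \<open>Distinguishing two inequivalent vertices\<close>

lemma card_filter_diff_eq:
  assumes "finite X" "finite Y" "card {y \<in> X. P y} = card {y \<in> Y. P y}"
  shows "card {y \<in> X - Y. P y} = card {y \<in> Y - X. P y}"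
proof -
  have split: "card {y \<in> S. P y} = card {y \<in> S - T. P y} + card {y \<in> S \<inter> T. P y}"
    if "finite S" for S T
  proof -
    have "{y \<in> S. P y} = {y \<in> S - T. P y} \<union> {y \<in> S \<inter> T. P y}" by auto
    moreover have "card ({y \<in> S - T. P y} \<union> {y \<in> S \<inter> T. P y})
        = card {y \<in> S - T. P y} + card {y \<in> S \<inter> T. P y}"
      using that by (intro card_Un_disjoint) auto
    ultimately show ?thesis by simp
  qed
  show ?thesis
    using assms(3) split[OF assms(1), of Y] split[OF assms(2), of X] by (simp add: Int_commute)
qed

context connected_locally_finite_graph
begin

lemma AE_card_blue_gball_differ:
  assumes v0: "v0 \<in> V" and p: "\<And>n. 0 \<le> p n \<and> p n \<le> 1" and dec: "decseq p"
    and lim: "p \<longlonglongrightarrow> 0" and not_summable: "\<not> summable p"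
    and u: "u \<in> V" and w: "w \<in> V" and not_equiv: "\<not> ball_equiv V E u w"
  shows "AE l in random_coloring V E v0 p.
    \<exists>R. card {y \<in> gball V E u R. l y} \<noteq> card {y \<in> gball V E w R. l y}"
proof -
  interpret independent_coins V "\<lambda>x. p (gdist E v0 x)"
    using p by unfold_locales auto
  have coloring: "random_coloring V E v0 p = coins"
    by (simp add: random_coloring_def coin_def[abs_def])
  define D where "D = gdist E u w"
  have D: "1 \<le> D"
    using not_equiv gdist_eq_0_iff[OF u w] by (fastforce simp: D_def ball_equiv_def)
  obtain N where N: "\<And>n. N \<le> n \<Longrightarrow> p n < 1/2"
    using order_tendstoD(2)[OF lim, of "1/2"] by (auto simp: eventually_sequentially)
  define k\<^sub>0 where "k\<^sub>0 = N + gdist E v0 u"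
  \<comment> \<open>the shift by \<open>k\<^sub>0\<close> moves every shell beyond distance \<open>N\<close> from \<open>v0\<close>, where \<open>p < 1/2\<close>\<close>
  define c where "c = gdist E v0 u + D + k\<^sub>0 * D"
  define A where "A k = gball V E u ((k + k\<^sub>0) * D) - gball V E w ((k + k\<^sub>0) * D)" for k
  define C where "C k = gball V E w ((k + k\<^sub>0) * D) - gball V E u ((k + k\<^sub>0) * D)" for k
  have shell: "A k \<union> C k = shell u w ((k + k\<^sub>0) * D)" for k
    by (simp add: shell_def A_def C_def)
  have "\<forall>k. \<exists>y. y \<in> A k \<union> C k"
    using not_equiv by (auto simp: A_def C_def ball_equiv_def)
  then obtain x where x: "\<And>k. x k \<in> A k \<union> C k" by (metis choice)
  have bound: "norm (p (c + k * D)) \<le> min (p (gdist E v0 (x k))) (1 - p (gdist E v0 (x k)))" for k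
  proof -
    have x_shell: "x k \<in> shell u w ((k + k\<^sub>0) * gdist E u w)"
      using x[of k] by (simp add: shell D_def)
    then have "N \<le> gdist E v0 (x k)" "gdist E v0 (x k) \<le> c + k * D"
      using gdist_shell_bounds[OF u w v0 D[unfolded D_def] x_shell]
      by (simp_all add: k\<^sub>0_def c_def D_def algebra_simps)
    then have "p (gdist E v0 (x k)) < 1/2" "p (c + k * D) \<le> p (gdist E v0 (x k))"
      using N dec by (auto simp: decseq_def)
    moreover have "0 \<le> p (c + k * D)" using p by simp
    ultimately show ?thesis by (simp add: min_def)
  qed
  have "\<not> summable (\<lambda>k. min (p (gdist E v0 (x k))) (1 - p (gdist E v0 (x k))))"
  proof
    assume "summable (\<lambda>k. min (p (gdist E v0 (x k))) (1 - p (gdist E v0 (x k))))"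
    then have "summable (\<lambda>k. p (c + k * D))"
      by (rule summable_comparison_test') (rule bound)
    moreover have "\<not> summable (\<lambda>k. p (c + k * D))"
      using p by (intro not_summable_arith_progression[OF dec _ not_summable D]) auto
    ultimately show False by contradiction
  qed
  moreover have "disjoint_family (\<lambda>k. A k \<union> C k)"
    unfolding shell D_def using u w by (rule disjoint_family_shell)
  moreover have "finite (A k)" "finite (C k)" "A k \<inter> C k = {}" "A k \<union> C k \<subseteq> V" for k
    using finite_gball[OF u] finite_gball[OF w] by (auto simp: A_def C_def gball_def)
  ultimately have null: "(\<Inter>k. {l \<in> space coins. card {y \<in> A k. l y} = card {y \<in> C k. l y}})
      \<in> null_sets coins"
    using x by (intro null_sets_INT_card_eq) auto
  have "card {y \<in> A k. l y} = card {y \<in> C k. l y}"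
    if "\<forall>R. card {y \<in> gball V E u R. l y} = card {y \<in> gball V E w R. l y}" for l k
    using that card_filter_diff_eq[OF finite_gball[OF u] finite_gball[OF w]] by (simp add: A_def C_def)
  with null show ?thesis unfolding coloring by (intro AE_I') auto
qed

end

theorem lemma3p3:
  fixes V :: "'a set" and E :: "'a \<Rightarrow> 'a \<Rightarrow> bool" and v0 :: 'a and p :: "nat \<Rightarrow> real"
  assumes "simple_graph V E"
    and "connected_graph V E"
    and "locally_finite V E"
    and "v0 \<in> V"
    and "\<And>n. 0 \<le> p n \<and> p n \<le> 1"
    and "decseq p"
    and "p \<longlonglongrightarrow> 0"
    and "\<not> summable p"
  shows "AE l in random_coloring V E v0 p.
           \<forall>g. graph_automorphism V E g \<and> preserves_coloring V g l
                 \<longrightarrow> (\<forall>u\<in>V. ball_equiv V E (g u) u)"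
proof -
  interpret connected_locally_finite_graph V E
    using assms(1-3) by unfold_locales
  define S where "S = {(u, w). u \<in> V \<and> w \<in> V \<and> \<not> ball_equiv V E u w}"
  have "countable S"
    using countable_vertices[OF assms(4)] by (auto simp: S_def intro: countable_subset[of _ "V \<times> V"])
  then have "AE l in random_coloring V E v0 p. \<forall>(u, w)\<in>S.
      \<exists>R. card {y \<in> gball V E u R. l y} \<noteq> card {y \<in> gball V E w R. l y}"
    using AE_card_blue_gball_differ[OF assms(4-8)] by (intro AE_ball_countable') (auto simp: S_def)
  then show ?thesis
  proof (rule AE_mp, intro AE_I2 impI allI ballI)
    fix l g u
    assume differ: "\<forall>(u, w)\<in>S. \<exists>R. card {y \<in> gball V E u R. l y} \<noteq> card {y \<in> gball V E w R. l y}"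
      and g: "graph_automorphism V E g \<and> preserves_coloring V g l" and u: "u \<in> V"
    show "ball_equiv V E (g u) u"
    proof (rule ccontr)
      assume "\<not> ball_equiv V E (g u) u"
      then have "(g u, u) \<in> S" using automorphism_in_V g u by (auto simp: S_def)
      with differ obtain R where "card {y \<in> gball V E (g u) R. l y} \<noteq> card {y \<in> gball V E u R. l y}"
        by blast
      with card_blue_gball_automorphism g u show False by blast
    qed
  qed
qed

end
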